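(* Let $(p_x,p'_x)$ and $(p_y,p'_y)$ be pairs of positive integers with $|p_x-p'_x|=|p_y-p'_y|=1$, and let $X=\alpha_{(p_x,p'_x)}(Y)$, $Y=\alpha_{(p_y,p'_y)}(Z)$ be finite Sturmian words, $Z$ a finite word. Then the number of original center occurrences in $X$ (equivalently, of original maximal palindrome occurrences in $X$), relative to $X=\alpha_{(p_x,p'_x)}(Y)$, equals $$2(p_x-1)\bigl(|Z|_a\,p_y+|Z|_b\,p'_y\bigr)+2|Z|\,p'_x.$$
   Context: $\alpha_{(p,p')}$ is the morphism $a\mapsto a^pb$, $b\mapsto a^{p'}b$. A Sturmian word is a right-infinite aperiodic word over $\{a,b\}$ with exactly $n+1$ factors of each length $n$; a finite Sturmian word is a finite factor of one. $|W|_l$ is the number of occurrences of letter $l$ in $W$. A center occurrence in a word is an occurrence of one of the factors $a$, $b$, $aa$; each is the center of exactly one maximal palindrome occurrence. Write $Y=y_1\cdots y_m$ and $X=\alpha(y_1)\cdots\alpha(y_m)$ with $\alpha=\alpha_{(p_x,p'_x)}$, $\alpha(y_j)$ occupying positions $s_j+1,\dots,s_j+|\alpha(y_j)|$, $s_j=\sum_{t<j}|\alpha(y_t)|$. The reflection of an occurrence $y_j=a$ (resp. $y_j=b$) is the center (middle letter if odd length, middle two letters if even length) of the run $a^{p_x}$ (resp. $a^{p'_x}$) at positions $s_j+1,\dots,s_j+p_x$ (resp. $s_j+p'_x$); the reflection of an occurrence $y_jy_{j+1}=aa$ is the letter $b$ at position $s_j+p_x+1$. A center occurrence of $X$ is original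 if it is not the reflection of any center occurrence of $Y$. *)

theory Defs
  imports Main
begin

datatype letter = a | b

definition alpha_img :: "nat \<Rightarrow> nat \<Rightarrow> letter \<Rightarrow> letter list" where
  "alpha_img p p' l = (case l of a \<Rightarrow> replicate p a @ [b] | b \<Rightarrow> replicate p' a @ [b])"

definition alpha :: "nat \<Rightarrow> nat \<Rightarrow> letter list \<Rightarrow> letter list" where
  "alpha p p' w = concat (map (alpha_img p p') w)"

definition factors_of_length :: "(nat \<Rightarrow> letter) \<Rightarrow> nat \<Rightarrow> letter list set" where
  "factors_of_length w n = {map w [i..<i+n] | i. True}"

definition aperiodic :: "(nat \<Rightarrow> letter) \<Rightarrow> bool" where
  "aperiodic w \<longleftrightarrow> \<not> (\<exists>q>0. \<exists>N. \<forall>i\<ge>N. w (i + q) = w i)"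

definition sturmian :: "(nat \<Rightarrow> letter) \<Rightarrow> bool" where
  "sturmian w \<longleftrightarrow> aperiodic w \<and> (\<forall>n. card (factors_of_length w n) = n + 1)"

definition finite_sturmian :: "letter list \<Rightarrow> bool" where
  "finite_sturmian u \<longleftrightarrow> (\<exists>w i. sturmian w \<and> u = map w [i..<i + length u])"

text \<open>Occurrences are pairs (start position, length), positions 0-based.
  Center occurrences: occurrences of the factors a, b, aa.\<close>
definition center_occs :: "letter list \<Rightarrow> (nat \<times> nat) set" where
  "center_occs X = {(i, 1) | i. i < length X} \<union>
     {(i, 2) | i. i + 1 < length X \<and> X ! i = a \<and> X ! (i + 1) = a}"

definition run_center :: "nat \<Rightarrow> nat \<Rightarrow> nat \<times> nat" where
  "run_center s r = (if odd r then (s + r div 2, 1) else (s + r div 2 - 1, 2))"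

definition alpha_start :: "nat \<Rightarrow> nat \<Rightarrow> letter list \<Rightarrow> nat \<Rightarrow> nat" where
  "alpha_start p p' Y j = length (alpha p p' (take j Y))"

definition reflection :: "nat \<Rightarrow> nat \<Rightarrow> letter list \<Rightarrow> nat \<times> nat \<Rightarrow> nat \<times> nat" where
  "reflection p p' Y occ =
     (let j = fst occ; s = alpha_start p p' Y j in
      if snd occ = 2 then (s + p, 1)
      else if Y ! j = a then run_center s p
      else run_center s p')"

definition original_center_occs :: "nat \<Rightarrow> nat \<Rightarrow> letter list \<Rightarrow> (nat \<times> nat) set" where
  "original_center_occs p p' Y =
     center_occs (alpha p p' Y) - reflection p p' Y ` center_occs Y"

end

theory Submission
  imports Defs
begin

text \<open>Reflection maps the center occurrences of Y injectively into those of X = alpha(Y),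
  each into the block alpha(y_j) of its own letter, so the original ones number
  #centers(X) - #centers(Y). In the image of alpha_(p,p') with p, p' > 0 every block a^r b
  carries r + 1 letters and r - 1 factors aa, i.e. 2r centers, so a word has twice as many
  centers as letters a; counting the a's through both morphisms gives the formula.\<close>

lemma alpha_Nil [simp]: "alpha p p' [] = []"
  by (simp add: alpha_def)

lemma alpha_Cons [simp]: "alpha p p' (x # w) = alpha_img p p' x @ alpha p p' w"
  by (simp add: alpha_def)

lemma alpha_append [simp]: "alpha p p' (u @ w) = alpha p p' u @ alpha p p' w"
  by (simp add: alpha_def)

definition run_length :: "nat \<Rightarrow> nat \<Rightarrow> letter \<Rightarrow> nat" where
  "run_length p p' x = (case x of a \<Rightarrow> p | b \<Rightarrow> p')"

lemma alpha_img_eq: "alpha_img p p' x = replicate (run_length p p' x) a @ [b]"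
  by (cases x) (simp_all add: alpha_img_def run_length_def)

lemma length_alpha_img: "length (alpha_img p p' x) = run_length p p' x + 1"
  by (simp add: alpha_img_eq)

lemma run_length_pos: "p > 0 \<Longrightarrow> p' > 0 \<Longrightarrow> run_length p p' x > 0"
  by (cases x) (simp_all add: run_length_def)

lemma count_list_replicate_self [simp]: "count_list (replicate n x) x = n"
  by (induction n) simp_all

lemma count_list_alpha_a:
  "count_list (alpha p p' w) a = count_list w a * p + count_list w b * p'"
  by (induction w) (auto simp: alpha_img_def split: letter.splits)

lemma count_list_alpha_b: "count_list (alpha p p' w) b = length w"
  by (induction w) (auto simp: alpha_img_def split: letter.splits)

fun aa_count :: "letter list \<Rightarrow> nat" where
  "aa_count [] = 0"
| "aa_count [x] = 0"
| "aa_count (x # y # w) = (if x = a \<and> y = a then 1 else 0) + aa_count (y # w)"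

definition aa_positions :: "letter list \<Rightarrow> nat set" where
  "aa_positions w = {i. i + 1 < length w \<and> w ! i = a \<and> w ! (i + 1) = a}"

lemma finite_aa_positions: "finite (aa_positions w)"
  by (rule finite_subset[of _ "{..<length w}"]) (auto simp: aa_positions_def)

lemma aa_positions_Cons_Cons:
  "aa_positions (x # y # w) =
     (if x = a \<and> y = a then insert 0 (Suc ` aa_positions (y # w)) else Suc ` aa_positions (y # w))"
proof -
  have "i \<in> aa_positions (x # y # w) \<longleftrightarrow>
          (i = 0 \<and> x = a \<and> y = a) \<or> (\<exists>j. i = Suc j \<and> j \<in> aa_positions (y # w))" for i
    by (cases i) (auto simp: aa_positions_def)
  then show ?thesis
    by (auto simp: image_iff)
qed

lemma card_aa_positions: "card (aa_positions w) = aa_count w"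
proof (induction w rule: aa_count.induct)
  case (3 x y w)
  then have "card (Suc ` aa_positions (y # w)) = aa_count (y # w)"
    by (simp add: card_image)
  then show ?case
    using finite_aa_positions[of "y # w"] by (auto simp: aa_positions_Cons_Cons)
qed (simp_all add: aa_positions_def)

lemma aa_count_append:
  "aa_count (u @ v) = aa_count u + aa_count v +
     (if u \<noteq> [] \<and> v \<noteq> [] \<and> last u = a \<and> hd v = a then 1 else 0)"
proof (induction u rule: aa_count.induct)
  case (2 x)
  then show ?case by (cases v) auto
qed auto

lemma aa_count_run: "aa_count (replicate r a @ [b]) = r - 1"
proof (induction r)
  case (Suc r)
  then show ?case by (cases r) auto
qed simp

lemma finite_center_occs: "finite (center_occs w)"
  by (rule finite_subset[of _ "{..<length w} \<times> {1, 2}"]) (auto simp: center_occs_def)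

lemma card_center_occs: "card (center_occs w) = length w + aa_count w"
proof -
  have split: "center_occs w = (\<lambda>i. (i, 1::nat)) ` {..<length w} \<union> (\<lambda>i. (i, 2)) ` aa_positions w"
    by (auto simp: center_occs_def aa_positions_def)
  have "card (center_occs w) =
          card ((\<lambda>i. (i, 1::nat)) ` {..<length w}) + card ((\<lambda>i. (i, 2::nat)) ` aa_positions w)"
    unfolding split by (rule card_Un_disjoint) (auto simp: finite_aa_positions)
  also have "\<dots> = length w + card (aa_positions w)"
    by (simp add: card_image inj_on_def)
  finally show ?thesis
    by (simp add: card_aa_positions)
qed

text \<open>Blocks end with \<open>b\<close>, so no factor \<open>aa\<close> straddles two blocks.\<close>

lemma card_center_occs_alpha:
  assumes "p > 0" "p' > 0"
  shows "card (center_occs (alpha p p' w)) = 2 * count_list (alpha p p' w) a"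
proof -
  have "length (alpha p p' w) + aa_count (alpha p p' w) = 2 * count_list (alpha p p' w) a"
  proof (induction w)
    case (Cons x w)
    have "run_length p p' x > 0"
      using assms by (rule run_length_pos)
    moreover have "aa_count (alpha p p' (x # w)) = run_length p p' x - 1 + aa_count (alpha p p' w)"
      unfolding alpha_Cons alpha_img_eq aa_count_append[of "replicate _ a @ [b]"] aa_count_run
      by simp
    ultimately show ?case
      using Cons by (simp add: alpha_img_eq)
  qed simp
  then show ?thesis
    by (simp add: card_center_occs)
qed

lemma alpha_start_Suc:
  "j < length Y \<Longrightarrow>
     alpha_start p p' Y (Suc j) = alpha_start p p' Y j + run_length p p' (Y ! j) + 1"
  by (simp add: alpha_start_def take_Suc_conv_app_nth length_alpha_img)

lemma alpha_start_mono: "j \<le> j' \<Longrightarrow> alpha_start p p' Y j \<le> alpha_start p p' Y j'"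
  unfolding alpha_start_def
  by (metis alpha_append append_take_drop_id le_add1 length_append min.absorb1 take_take)

lemma alpha_block_le_length:
  "j < length Y \<Longrightarrow> alpha_start p p' Y j + run_length p p' (Y ! j) + 1 \<le> length (alpha p p' Y)"
  using alpha_start_mono[of "Suc j" "length Y" p p' Y] alpha_start_Suc[of j Y p p']
  by (simp add: alpha_start_def)

lemma nth_alpha_block:
  assumes "j < length Y" "k < run_length p p' (Y ! j)"
  shows "alpha p p' Y ! (alpha_start p p' Y j + k) = a"
proof -
  have "Y = take j Y @ Y ! j # drop (Suc j) Y"
    using assms(1) by (simp add: id_take_nth_drop)
  then have "alpha p p' Y =
      alpha p p' (take j Y) @ alpha_img p p' (Y ! j) @ alpha p p' (drop (Suc j) Y)"
    by (metis alpha_Cons alpha_append)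
  then show ?thesis
    using assms(2) by (simp add: alpha_start_def nth_append alpha_img_eq)
qed

lemma reflection_single:
  "l \<noteq> 2 \<Longrightarrow> reflection p p' Y (j, l) = run_center (alpha_start p p' Y j) (run_length p p' (Y ! j))"
  by (cases "Y ! j") (simp_all add: reflection_def run_length_def)

lemma reflection_double: "reflection p p' Y (j, 2) = (alpha_start p p' Y j + p, 1)"
  by (simp add: reflection_def)

lemma fst_run_center: "r > 0 \<Longrightarrow> fst (run_center s r) = s + (r - 1) div 2"
  by (auto simp: run_center_def elim!: evenE oddE)

lemma center_occs_cases:
  "(j, l) \<in> center_occs Y \<longleftrightarrow> j < length Y \<and> (l = 1 \<or> l = 2 \<and> Y ! j = a \<and> j + 1 < length Y \<and> Y ! (j + 1) = a)"
  by (auto simp: center_occs_def)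

lemma reflection_in_center_occs:
  assumes "p > 0" "p' > 0" "(j, l) \<in> center_occs Y"
  shows "reflection p p' Y (j, l) \<in> center_occs (alpha p p' Y)"
proof -
  define s where "s = alpha_start p p' Y j"
  define r where "r = run_length p p' (Y ! j)"
  have j: "j < length Y"
    using assms(3) by (simp add: center_occs_cases)
  have "r > 0"
    using assms(1,2) by (simp add: r_def run_length_pos)
  have block_end: "s + r + 1 \<le> length (alpha p p' Y)"
    using alpha_block_le_length[OF j] by (simp add: s_def r_def)
  have in_run: "alpha p p' Y ! (s + k) = a" if "k < r" for k
    using nth_alpha_block[OF j] that by (simp add: s_def r_def)
  consider "l = 2" "Y ! j = a" | "l = 1"
    using assms(3) by (auto simp: center_occs_cases)
  then show ?thesis
  proof cases
    case 1
    then have "r = p"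
      by (simp add: r_def run_length_def)
    with 1 show ?thesis
      using block_end by (simp add: reflection_double center_occs_def s_def)
  next
    case 2
    show ?thesis
    proof (cases "odd r")
      case True
      with 2 show ?thesis
        using block_end by (auto simp: center_occs_def run_center_def reflection_single
            s_def[symmetric] r_def[symmetric])
    next
      case False
      then obtain m where m: "r = 2 * m" by auto
      with \<open>r > 0\<close> have "m > 0" by simp
      then have "alpha p p' Y ! (s + m - 1) = a" "alpha p p' Y ! (s + m - 1 + 1) = a"
        using in_run[of "m - 1"] in_run[of m] m by simp_all
      with 2 False m \<open>m > 0\<close> show ?thesis
        using block_end by (auto simp: center_occs_def run_center_def reflection_single
            s_def[symmetric] r_def[symmetric])
    qed
  qed
qed

text \<open>The reflection of a center in y_j lies in the block alpha(y_j), and inside the block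
  of an a the reflection of aa is the final b, strictly after that of a.\<close>

lemma fst_reflection_bounds:
  assumes "p > 0" "p' > 0" "(j, l) \<in> center_occs Y"
  shows "alpha_start p p' Y j \<le> fst (reflection p p' Y (j, l))"
    and "fst (reflection p p' Y (j, l)) < alpha_start p p' Y (Suc j)"
    and "l = 2 \<Longrightarrow> fst (reflection p p' Y (j, l)) = alpha_start p p' Y j + p"
    and "l = 1 \<Longrightarrow> Y ! j = a \<Longrightarrow> fst (reflection p p' Y (j, l)) < alpha_start p p' Y j + p"
proof -
  have j: "j < length Y" and l: "l = 1 \<or> l = 2 \<and> Y ! j = a"
    using assms(3) by (auto simp: center_occs_cases)
  have r: "run_length p p' (Y ! j) > 0"
    using assms(1,2) by (rule run_length_pos)
  then have half: "(run_length p p' (Y ! j) - 1) div 2 < run_length p p' (Y ! j)"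
    by linarith
  show "alpha_start p p' Y j \<le> fst (reflection p p' Y (j, l))"
    using l r by (auto simp: reflection_single reflection_double fst_run_center)
  show "fst (reflection p p' Y (j, l)) < alpha_start p p' Y (Suc j)"
    using l r half alpha_start_Suc[OF j]
    by (auto simp: reflection_single reflection_double fst_run_center run_length_def)
  show "l = 2 \<Longrightarrow> fst (reflection p p' Y (j, l)) = alpha_start p p' Y j + p"
    by (simp add: reflection_double)
  show "l = 1 \<Longrightarrow> Y ! j = a \<Longrightarrow> fst (reflection p p' Y (j, l)) < alpha_start p p' Y j + p"
    using half by (simp add: reflection_single fst_run_center r run_length_def)
qed

lemma inj_on_reflection:
  assumes "p > 0" "p' > 0"
  shows "inj_on (reflection p p' Y) (center_occs Y)"
proof (rule inj_onI)
  fix x y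
  assume x: "x \<in> center_occs Y" and y: "y \<in> center_occs Y"
    and eq: "reflection p p' Y x = reflection p p' Y y"
  obtain j1 l1 j2 l2 where xy: "x = (j1, l1)" "y = (j2, l2)"
    by (cases x, cases y)
  note bounds1 = fst_reflection_bounds[OF assms x[unfolded xy(1)]]
  note bounds2 = fst_reflection_bounds[OF assms y[unfolded xy(2)]]
  have "j1 = j2"
  proof (rule ccontr)
    assume "j1 \<noteq> j2"
    then have "alpha_start p p' Y (Suc j1) \<le> alpha_start p p' Y j2 \<or>
               alpha_start p p' Y (Suc j2) \<le> alpha_start p p' Y j1"
      by (meson alpha_start_mono linorder_neqE_nat Suc_leI)
    then show False
      using bounds1(1,2) bounds2(1,2) eq xy by auto
  qed
  moreover have "l1 = l2"
    using x y xy \<open>j1 = j2\<close> bounds1(3,4) bounds2(3,4) eq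
    by (auto simp: center_occs_cases)
  ultimately show "x = y"
    using xy by simp
qed

lemma card_original_center_occs:
  assumes "p > 0" "p' > 0"
  shows "card (original_center_occs p p' Y) = card (center_occs (alpha p p' Y)) - card (center_occs Y)"
proof -
  have "reflection p p' Y ` center_occs Y \<subseteq> center_occs (alpha p p' Y)"
    using reflection_in_center_occs[OF assms] by auto
  then have "card (original_center_occs p p' Y) =
      card (center_occs (alpha p p' Y)) - card (reflection p p' Y ` center_occs Y)"
    unfolding original_center_occs_def
    by (meson card_Diff_subset finite_center_occs finite_subset)
  also have "card (reflection p p' Y ` center_occs Y) = card (center_occs Y)"
    by (rule card_image[OF inj_on_reflection[OF assms]])
  finally show ?thesis .
qed

theorem lemma3:
  fixes px px' py py' :: nat and X Y Z :: "letter list"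
  assumes "px > 0" "px' > 0" "py > 0" "py' > 0"
    and "\<bar>int px - int px'\<bar> = 1" "\<bar>int py - int py'\<bar> = 1"
    and "X = alpha px px' Y" "Y = alpha py py' Z"
    and "finite_sturmian X" "finite_sturmian Y"
  shows "card (original_center_occs px px' Y)
           = 2 * (px - 1) * (count_list Z a * py + count_list Z b * py') + 2 * length Z * px'"
proof -
  define n where "n = count_list Z a * py + count_list Z b * py'"
  have Y_a: "count_list Y a = n"
    using assms(8) by (simp add: n_def count_list_alpha_a)
  have X_a: "count_list (alpha px px' Y) a = n * px + length Z * px'"
    unfolding count_list_alpha_a Y_a by (simp add: assms(8) count_list_alpha_b)
  have Y_centers: "card (center_occs Y) = 2 * n"
    using card_center_occs_alpha[OF assms(3,4), of Z] assms(8) Y_a by simp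
  have "card (original_center_occs px px' Y) = 2 * (n * px + length Z * px') - 2 * n"
    using assms(1,2) by (simp add: card_original_center_occs card_center_occs_alpha X_a Y_centers)
  also have "\<dots> = 2 * (px - 1) * n + 2 * length Z * px'"
    using assms(1) by (cases px) (simp_all add: algebra_simps)
  finally show ?thesis
    by (simp add: n_def)
qed

end
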